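(* Let $q>0$, $d\ge0$ and $\mathcal{D}=\{(b_1,B_1),\ldots,(b_d,B_d)\}\subseteq[q]\times(2^{[q]}\smallsetminus\{\emptyset\})$ with $|B_j|\ge2$ for each $j\in[d]$. Then: (1) $\mathcal{E}_{\mathcal{D}}$ is minimally generated by $\varepsilon_{\mathcal{D},1},\ldots,\varepsilon_{\mathcal{D},q}$; (2) $Q(\mathcal{D})=Q(\mathcal{D}\cup\{(b,B)\})$ for every $(b,B)\in{\sf Div}(\mathcal{E}_{\mathcal{D}})$; (3) if $(b,B)\in{\sf Div}(\mathcal{E}_{\mathcal{D}})$ and $b\notin B$, then $b\in{\sf Base}(\mathcal{D})$.
   Context: Let $\mathsf k$ be a field and $S_{[q]}=\mathsf k[y_A:\emptyset\ne A\subseteq[q]]$. For $\mathcal{D}\subseteq[q]\times(2^{[q]}\smallsetminus\{\emptyset\})$ let $Q(\mathcal{D})=\{A\subseteq[q]: A\ne\emptyset,\ A\cap B\ne\emptyset\text{ for all }(b,B)\in\mathcal{D}\text{ with }b\in A\}$, $\varepsilon_{\mathcal{D},i}=\prod_{A\in Q(\mathcal{D}),\,i\in A}y_A$ for $i\in[q]$, and $\mathcal{E}_{\mathcal{D}}=(\varepsilon_{\mathcal{D},1},\ldots,\varepsilon_{\mathcal{D},q})$. ${\sf Base}(\mathcal{D})=\{b_1,\dots,b_d\}$. A divisibility relation on $\mathcal{E}_{\mathcal{D}}$ is a pair $(b,B)$ with $b\in[q]$, $\emptyset\ne B\subseteq[q]$ and $\varepsilon_{\mathcal{D},b}\mid\mathrm{lcm}(\varepsilon_{\mathcal{D},i}:i\in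 B)$; ${\sf Div}(\mathcal{E}_{\mathcal{D}})$ is the set of all these. *)

theory Defs
  imports "HOL-Library.Poly_Mapping"
begin

text \<open>Polynomials over 'k in variables y_A indexed by sets A of naturals:
  monomials are exponent vectors (finitely supported maps nat set to nat),
  polynomials are finitely supported maps from monomials to coefficients,
  with the convolution product of HOL-Library.Poly_Mapping.\<close>
type_synonym 'k mpoly = "(nat set \<Rightarrow>\<^sub>0 nat) \<Rightarrow>\<^sub>0 'k"

definition vars :: "nat \<Rightarrow> nat set set" where
  "vars q = {A. A \<noteq> {} \<and> A \<subseteq> {1..q}}"

definition S :: "nat \<Rightarrow> ('k::field) mpoly set" where
  "S q = {p. \<forall>m \<in> Poly_Mapping.keys p. Poly_Mapping.keys m \<subseteq> vars q}"

definition Y :: "nat set \<Rightarrow> ('k::field) mpoly" where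
  "Y A = Poly_Mapping.single (Poly_Mapping.single A 1) 1"

definition Q :: "nat \<Rightarrow> (nat \<times> nat set) set \<Rightarrow> nat set set" where
  "Q q D = {A. A \<noteq> {} \<and> A \<subseteq> {1..q} \<and> (\<forall>(b, B) \<in> D. b \<in> A \<longrightarrow> A \<inter> B \<noteq> {})}"

definition eps :: "nat \<Rightarrow> (nat \<times> nat set) set \<Rightarrow> nat \<Rightarrow> ('k::field) mpoly" where
  "eps q D i = (\<Prod>A \<in> {A \<in> Q q D. i \<in> A}. Y A)"

definition Base :: "(nat \<times> nat set) set \<Rightarrow> nat set" where
  "Base D = fst ` D"

definition idealS :: "nat \<Rightarrow> ('k::field) mpoly set \<Rightarrow> 'k mpoly set" where
  "idealS q G = {(\<Sum>g\<in>F. r g * g) | F r. finite F \<and> F \<subseteq> G \<and> (\<forall>g\<in>F. r g \<in> S q)}"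

definition minimally_generated :: "nat \<Rightarrow> (nat \<Rightarrow> ('k::field) mpoly) \<Rightarrow> bool" where
  "minimally_generated q g \<longleftrightarrow>
     (\<forall>J. J \<subset> {1..q} \<longrightarrow> idealS q (g ` J) \<noteq> idealS q (g ` {1..q}))"

definition dvdS :: "nat \<Rightarrow> ('k::field) mpoly \<Rightarrow> 'k mpoly \<Rightarrow> bool" where
  "dvdS q a b \<longleftrightarrow> (\<exists>c \<in> S q. b = c * a)"

definition is_lcmS :: "nat \<Rightarrow> ('k::field) mpoly set \<Rightarrow> 'k mpoly \<Rightarrow> bool" where
  "is_lcmS q G l \<longleftrightarrow> l \<in> S q \<and> (\<forall>g\<in>G. dvdS q g l) \<and>
     (\<forall>m \<in> S q. (\<forall>g\<in>G. dvdS q g m) \<longrightarrow> dvdS q l m)"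

definition Div :: "nat \<Rightarrow> (nat \<Rightarrow> ('k::field) mpoly) \<Rightarrow> (nat \<times> nat set) set" where
  "Div q g = {(b, B). b \<in> {1..q} \<and> B \<noteq> {} \<and> B \<subseteq> {1..q} \<and>
      (\<exists>l. is_lcmS q (g ` B) l \<and> dvdS q (g b) l)}"

end

theory Submission
  imports Defs
begin

text \<open>Each \<open>\<epsilon>\<^sub>i\<close> is the squarefree monomial whose exponent vector is the indicator of
  \<open>{A \<in> Q(\<D>). i \<in> A}\<close>, and every multiple \<open>r \<epsilon>\<^sub>i\<close> only has monomials with exponent at least 1
  on each such \<open>y\<^sub>A\<close>. For (1), if every \<open>|B| \<ge> 2\<close>, then \<open>A = [q] - {i}\<close> lies in \<open>Q(\<D>)\<close>, so
  \<open>y\<^sub>A\<close> divides every \<open>\<epsilon>\<^sub>j\<close> with \<open>j \<noteq> i\<close> but not \<open>\<epsilon>\<^sub>i\<close>. For (2) and (3), the product of the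
  \<open>\<epsilon>\<^sub>j\<close>, \<open>j \<in> B\<close>, is a common multiple, so \<open>\<epsilon>\<^sub>b\<close> divides it whenever \<open>(b, B) \<in> Div\<close>; hence every
  \<open>A \<in> Q(\<D>)\<close> containing \<open>b\<close> meets \<open>B\<close>, which is (2), and for \<open>b \<notin> Base(\<D>)\<close> the choice
  \<open>A = {b}\<close> gives (3).\<close>

lemma prod_single_one:
  "(\<Prod>x\<in>T. Poly_Mapping.single (f x) (1::'k::comm_semiring_1)) = Poly_Mapping.single (\<Sum>x\<in>T. f x) 1"
proof (cases "finite T")
  case True
  then show ?thesis by (induction T rule: finite_induct) (simp_all add: mult_single)
qed simp

lemma lookup_le_of_in_keys_mult_single:
  fixes a m :: "'a \<Rightarrow>\<^sub>0 nat" and r :: "('a \<Rightarrow>\<^sub>0 nat) \<Rightarrow>\<^sub>0 'k::comm_semiring_1"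
  assumes "m \<in> Poly_Mapping.keys (r * Poly_Mapping.single a c)"
  shows "Poly_Mapping.lookup a x \<le> Poly_Mapping.lookup m x"
proof -
  obtain u where "m = u + a"
    using assms keys_mult[of r "Poly_Mapping.single a c"] by (auto split: if_splits)
  then show ?thesis by (simp add: lookup_add)
qed

lemma single_one_in_S: "Poly_Mapping.keys a \<subseteq> vars q \<Longrightarrow> Poly_Mapping.single a 1 \<in> S q"
  by (simp add: S_def)

lemma generator_in_idealS:
  assumes "g \<in> G"
  shows "g \<in> idealS q G"
proof -
  have "(1::'k::field mpoly) \<in> S q" by (simp add: S_def)
  then show ?thesis unfolding idealS_def
    by (intro CollectI exI[of _ "{g}"] exI[of _ "\<lambda>_. 1"]) (use assms in auto)
qed

text \<open>Every term \<open>r\<^sub>g g\<close> of a combination has degree \<open>> a(x)\<close> in the variable \<open>x\<close>, so none of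
  them contributes the monomial \<open>a\<close>.\<close>
lemma single_one_notin_idealS_monomials:
  assumes "\<And>b. b \<in> E \<Longrightarrow> Poly_Mapping.lookup a x < Poly_Mapping.lookup b x"
  shows "Poly_Mapping.single a (1::'k::field) \<notin> idealS q ((\<lambda>b. Poly_Mapping.single b 1) ` E)"
proof
  assume "Poly_Mapping.single a (1::'k) \<in> idealS q ((\<lambda>b. Poly_Mapping.single b 1) ` E)"
  then obtain F r where F: "F \<subseteq> (\<lambda>b. Poly_Mapping.single b 1) ` E"
    and eq: "Poly_Mapping.single a (1::'k) = (\<Sum>g\<in>F. r g * g)"
    unfolding idealS_def by blast
  have "Poly_Mapping.lookup (r g * g) a = 0" if "g \<in> F" for g
  proof -
    obtain b where "b \<in> E" and g: "g = Poly_Mapping.single b 1" using F \<open>g \<in> F\<close> by blast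
    then have "\<not> Poly_Mapping.lookup b x \<le> Poly_Mapping.lookup a x" using assms by fastforce
    then show ?thesis
      unfolding g using lookup_le_of_in_keys_mult_single by (metis in_keys_iff)
  qed
  then have "Poly_Mapping.lookup (\<Sum>g\<in>F. r g * g) a = 0" by (simp add: lookup_sum)
  then show False unfolding eq[symmetric] by simp
qed

definition eps_exponent :: "nat \<Rightarrow> (nat \<times> nat set) set \<Rightarrow> nat \<Rightarrow> (nat set \<Rightarrow>\<^sub>0 nat)" where
  "eps_exponent q D i = (\<Sum>A\<in>{A \<in> Q q D. i \<in> A}. Poly_Mapping.single A 1)"

lemma finite_Q_containing: "finite {A \<in> Q q D. i \<in> A}"
  by (rule finite_subset[of _ "Pow {1..q}"]) (auto simp: Q_def)

lemma lookup_eps_exponent: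
  "Poly_Mapping.lookup (eps_exponent q D i) A = (if A \<in> Q q D \<and> i \<in> A then 1 else 0)"
  unfolding eps_exponent_def lookup_sum lookup_single
  using finite_Q_containing[of q D i] by (simp add: when_def)

lemma keys_eps_exponent: "Poly_Mapping.keys (eps_exponent q D i) \<subseteq> vars q"
  unfolding eps_exponent_def using keys_sum[of "\<lambda>A. Poly_Mapping.single A (1::nat)"]
  by (fastforce simp: Q_def vars_def)

lemma keys_sum_eps_exponent: "Poly_Mapping.keys (\<Sum>j\<in>B. eps_exponent q D j) \<subseteq> vars q"
  using keys_sum[of "eps_exponent q D" B] keys_eps_exponent by blast

lemma eps_eq_single: "(eps q D i :: 'k::field mpoly) = Poly_Mapping.single (eps_exponent q D i) 1"
  unfolding eps_def Y_def eps_exponent_def by (rule prod_single_one)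

lemma compl_singleton_in_Q:
  assumes "\<forall>(b, B) \<in> D. B \<subseteq> {1..q} \<and> 2 \<le> card B"
    and "j \<in> {1..q}" and "j \<noteq> i"
  shows "{1..q} - {i} \<in> Q q D"
proof -
  have "({1..q} - {i}) \<inter> B \<noteq> {}" if "(b, B) \<in> D" for b B
  proof
    assume "({1..q} - {i}) \<inter> B = {}"
    then have "B \<subseteq> {i}" using assms(1) that by blast
    then have "card B \<le> 1" using card_mono[of "{i}" B] by simp
    then show False using assms(1) that by fastforce
  qed
  then show ?thesis using assms(2,3) unfolding Q_def by auto
qed

lemma eps_notin_idealS_others:
  assumes "\<forall>(b, B) \<in> D. B \<subseteq> {1..q} \<and> 2 \<le> card B"
    and "J \<subseteq> {1..q}" and "i \<notin> J"
  shows "(eps q D i :: 'k::field mpoly) \<notin> idealS q (eps q D ` J)"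
proof -
  let ?A = "{1..q} - {i}"
  have "Poly_Mapping.lookup (eps_exponent q D i) ?A < Poly_Mapping.lookup b ?A"
    if b_in: "b \<in> eps_exponent q D ` J" for b
  proof -
    obtain j where "j \<in> J" and b: "b = eps_exponent q D j" using b_in by blast
    then have "j \<in> ?A" using assms(2,3) by auto
    then have "?A \<in> Q q D" using compl_singleton_in_Q[OF assms(1)] by blast
    with \<open>j \<in> ?A\<close> show ?thesis unfolding b by (simp add: lookup_eps_exponent)
  qed
  then have "Poly_Mapping.single (eps_exponent q D i) (1::'k) \<notin>
      idealS q ((\<lambda>b. Poly_Mapping.single b 1) ` eps_exponent q D ` J)"
    by (rule single_one_notin_idealS_monomials)
  then show ?thesis by (simp add: eps_eq_single image_image)
qed

lemma minimally_generated_eps: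
  assumes "\<forall>(b, B) \<in> D. B \<subseteq> {1..q} \<and> 2 \<le> card B"
  shows "minimally_generated q (eps q D :: nat \<Rightarrow> 'k::field mpoly)"
  unfolding minimally_generated_def
proof (intro allI impI)
  fix J assume "J \<subset> {1..q}"
  then obtain i where "i \<in> {1..q}" "i \<notin> J" by blast
  then have "eps q D i \<in> idealS q ((eps q D :: nat \<Rightarrow> 'k mpoly) ` {1..q})"
    by (intro generator_in_idealS imageI)
  moreover have "eps q D i \<notin> idealS q ((eps q D :: nat \<Rightarrow> 'k mpoly) ` J)"
    using eps_notin_idealS_others[OF assms] \<open>J \<subset> {1..q}\<close> \<open>i \<notin> J\<close> by blast
  ultimately show "idealS q ((eps q D :: nat \<Rightarrow> 'k mpoly) ` J) \<noteq> idealS q (eps q D ` {1..q})"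
    by blast
qed

lemma Div_eps_divides_product:
  assumes "(b, B) \<in> Div q (eps q D :: nat \<Rightarrow> 'k mpoly)"
  obtains c :: "'k::field mpoly"
  where "Poly_Mapping.single (\<Sum>j\<in>B. eps_exponent q D j) 1 = c * eps q D b"
proof -
  from assms obtain l :: "'k mpoly" where lcm: "is_lcmS q (eps q D ` B) l"
    and "dvdS q (eps q D b) l" and "B \<subseteq> {1..q}"
    unfolding Div_def by auto
  then have "finite B" using finite_subset by blast
  define m :: "'k mpoly" where "m = Poly_Mapping.single (\<Sum>j\<in>B. eps_exponent q D j) 1"
  have "dvdS q (eps q D i) m" if "i \<in> B" for i
  proof -
    have "(\<Sum>j\<in>B. eps_exponent q D j) = (\<Sum>j\<in>B-{i}. eps_exponent q D j) + eps_exponent q D i"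
      using sum.remove[OF \<open>finite B\<close> that, of "eps_exponent q D"] by (simp add: add.commute)
    then have "m = Poly_Mapping.single (\<Sum>j\<in>B-{i}. eps_exponent q D j) 1 * eps q D i"
      by (simp add: m_def eps_eq_single mult_single)
    then show ?thesis
      unfolding dvdS_def using single_one_in_S[OF keys_sum_eps_exponent] by blast
  qed
  moreover have "m \<in> S q"
    unfolding m_def by (rule single_one_in_S[OF keys_sum_eps_exponent])
  ultimately have "dvdS q l m" using lcm unfolding is_lcmS_def by blast
  with \<open>dvdS q (eps q D b) l\<close> obtain c c' where "m = c * l" "l = c' * eps q D b"
    unfolding dvdS_def by blast
  then show thesis using that[of "c * c'"] unfolding m_def by (simp add: mult.assoc)
qed

lemma Div_eps_meets_Q:
  assumes "(b, B) \<in> Div q (eps q D :: nat \<Rightarrow> 'k::field mpoly)"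
    and "A \<in> Q q D" and "b \<in> A"
  shows "A \<inter> B \<noteq> {}"
proof
  assume disjoint: "A \<inter> B = {}"
  let ?M = "\<Sum>j\<in>B. eps_exponent q D j"
  obtain c :: "'k mpoly" where "Poly_Mapping.single ?M 1 = c * eps q D b"
    using Div_eps_divides_product[OF assms(1)] .
  moreover have "?M \<in> Poly_Mapping.keys (Poly_Mapping.single ?M (1::'k))" by simp
  ultimately have "?M \<in> Poly_Mapping.keys (c * Poly_Mapping.single (eps_exponent q D b) 1)"
    by (simp add: eps_eq_single)
  then have "Poly_Mapping.lookup (eps_exponent q D b) A \<le> Poly_Mapping.lookup ?M A"
    by (rule lookup_le_of_in_keys_mult_single)
  moreover have "Poly_Mapping.lookup ?M A = 0"
    using disjoint by (auto simp: lookup_sum lookup_eps_exponent intro!: sum.neutral)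
  ultimately show False using assms(2,3) by (simp add: lookup_eps_exponent)
qed

lemma Q_union_Div_eps:
  assumes "(b, B) \<in> Div q (eps q D :: nat \<Rightarrow> 'k::field mpoly)"
  shows "Q q (D \<union> {(b, B)}) = Q q D"
  using Div_eps_meets_Q[OF assms] unfolding Q_def by auto

lemma Div_eps_in_Base:
  assumes "(b, B) \<in> Div q (eps q D :: nat \<Rightarrow> 'k::field mpoly)" and "b \<notin> B"
  shows "b \<in> Base D"
proof (rule ccontr)
  assume "b \<notin> Base D"
  then have "\<forall>(b', B') \<in> D. b' \<noteq> b" unfolding Base_def by force
  moreover have "b \<in> {1..q}" using assms(1) unfolding Div_def by blast
  ultimately have "{b} \<in> Q q D" unfolding Q_def by auto
  from Div_eps_meets_Q[OF assms(1) this] \<open>b \<notin> B\<close> show False by simp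
qed

theorem proposition3p3:
  fixes q :: nat and D :: "(nat \<times> nat set) set"
  assumes "q > 0"
    and "D \<subseteq> {1..q} \<times> {B. B \<noteq> {} \<and> B \<subseteq> {1..q}}"
    and "\<forall>(b, B) \<in> D. card B \<ge> 2"
  shows "minimally_generated q (eps q D :: nat \<Rightarrow> 'k::field mpoly) \<and>
    (\<forall>(b, B) \<in> Div q (eps q D :: nat \<Rightarrow> 'k::field mpoly). Q q D = Q q (D \<union> {(b, B)})) \<and>
    (\<forall>(b, B) \<in> Div q (eps q D :: nat \<Rightarrow> 'k::field mpoly). b \<notin> B \<longrightarrow> b \<in> Base D)"
proof -
  have "\<forall>(b, B) \<in> D. B \<subseteq> {1..q} \<and> 2 \<le> card B" using assms(2,3) by blast
  then have "minimally_generated q (eps q D :: nat \<Rightarrow> 'k mpoly)"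
    by (rule minimally_generated_eps)
  moreover have "\<forall>(b, B) \<in> Div q (eps q D :: nat \<Rightarrow> 'k mpoly). Q q D = Q q (D \<union> {(b, B)})"
    by (clarify, rule sym, rule Q_union_Div_eps)
  moreover have "\<forall>(b, B) \<in> Div q (eps q D :: nat \<Rightarrow> 'k mpoly). b \<notin> B \<longrightarrow> b \<in> Base D"
    using Div_eps_in_Base by blast
  ultimately show ?thesis by (rule conjI[OF _ conjI])
qed

end
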